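(* Let $\mathcal F$ be a proper family on an infinite set $Q$. Then: (a) $\mathcal F^{\#}$ is a filter contained in $\mathcal F\cap\mathcal F^*$, and it is full if $\mathcal F$ is full; (b) $\mathcal F^{\#}=(\mathcal F^* )^{\#}$; (c) if $\mathcal F$ is a filter then $\mathcal F^{\#}=\mathcal F$; in particular $(\mathcal F^{\#})^{\#}=\mathcal F^{\#}$; (d) if $\mathcal F$ is a filterdual then $\mathcal F^{\#}=\mathcal F^*$.
   Context: A family on $Q$ is a collection $\mathcal F$ of subsets of $Q$ closed under supersets ($A\in\mathcal F$, $A\subset B\subset Q$ implies $B\in\mathcal F$). It is proper if $\mathcal F\ne\emptyset$ and $\emptyset\notin\mathcal F$. The dual is $\mathcal F^*=\{B\subset Q: B\cap A\ne\emptyset\text{ for all }A\in\mathcal F\}$. A filter is a proper family closed under finite intersections; a filterdual is the dual of a filter, equivalently a proper family with $A_1\cup A_2\in\mathcal F\Rightarrow A_1\in\mathcal F$ or $A_2\in\mathcal F$. A family $\mathcal F$ is full if it is proper and $B\in\mathcal F$ implies $B\setminus F\in\mathcal F$ for every finite $F\subset Q$. The sharp dual is $\mathcal F^{\#}=\{A\subset Q: A\cap B\in\mathcal F\text{ for all }B\in\mathcal F\}$. *)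

theory Defs
  imports Main
begin

definition family_on :: "'a set \<Rightarrow> 'a set set \<Rightarrow> bool" where
  "family_on Q \<F> \<longleftrightarrow> \<F> \<subseteq> Pow Q \<and>
     (\<forall>A B. A \<in> \<F> \<and> A \<subseteq> B \<and> B \<subseteq> Q \<longrightarrow> B \<in> \<F>)"

definition proper_family :: "'a set \<Rightarrow> 'a set set \<Rightarrow> bool" where
  "proper_family Q \<F> \<longleftrightarrow> family_on Q \<F> \<and> \<F> \<noteq> {} \<and> {} \<notin> \<F>"

definition dual_fam :: "'a set \<Rightarrow> 'a set set \<Rightarrow> 'a set set" where
  "dual_fam Q \<F> = {B. B \<subseteq> Q \<and> (\<forall>A\<in>\<F>. B \<inter> A \<noteq> {})}"

definition sharp_dual :: "'a set \<Rightarrow> 'a set set \<Rightarrow> 'a set set" where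
  "sharp_dual Q \<F> = {A. A \<subseteq> Q \<and> (\<forall>B\<in>\<F>. A \<inter> B \<in> \<F>)}"

definition is_filter_on :: "'a set \<Rightarrow> 'a set set \<Rightarrow> bool" where
  "is_filter_on Q \<F> \<longleftrightarrow> proper_family Q \<F> \<and>
     (\<forall>A\<in>\<F>. \<forall>B\<in>\<F>. A \<inter> B \<in> \<F>)"

definition is_filterdual_on :: "'a set \<Rightarrow> 'a set set \<Rightarrow> bool" where
  "is_filterdual_on Q \<F> \<longleftrightarrow> (\<exists>\<G>. is_filter_on Q \<G> \<and> \<F> = dual_fam Q \<G>)"

definition full_family :: "'a set \<Rightarrow> 'a set set \<Rightarrow> bool" where
  "full_family Q \<F> \<longleftrightarrow> proper_family Q \<F> \<and>
     (\<forall>B\<in>\<F>. \<forall>F. finite F \<longrightarrow> B - F \<in> \<F>)"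

end

theory Submission
  imports Defs
begin

text \<open>
  Everything reduces to two observations. First, \<open>\<F>\<^sup>#\<close> is always closed under
  intersections and supersets, and it contains \<open>Q\<close> and misses \<open>\<emptyset>\<close> as soon as \<open>\<F>\<close> does.
  Second, for any family \<open>\<G>\<close>, a subset \<open>X \<notin> \<G>\<close> has its complement in \<open>\<G>\<^sup>*\<close>; this gives
  \<open>\<G>\<^sup>*\<^sup>* = \<G>\<close> and \<open>(\<G>\<^sup>*)\<^sup># = \<G>\<^sup>#\<close>. For a filterdual \<open>\<F> = \<G>\<^sup>*\<close> with \<open>\<G>\<close> a filter one
  then gets \<open>\<F>\<^sup># = \<G>\<^sup># = \<G> = \<F>\<^sup>*\<close>.
\<close>

lemma family_on_subset: "family_on Q \<F> \<Longrightarrow> A \<in> \<F> \<Longrightarrow> A \<subseteq> Q"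
  unfolding family_on_def by blast

lemma family_on_upward: "family_on Q \<F> \<Longrightarrow> A \<in> \<F> \<Longrightarrow> A \<subseteq> B \<Longrightarrow> B \<subseteq> Q \<Longrightarrow> B \<in> \<F>"
  unfolding family_on_def by blast

lemma proper_family_top: "proper_family Q \<F> \<Longrightarrow> Q \<in> \<F>"
  unfolding proper_family_def family_on_def by blast

lemma dual_famI: "B \<subseteq> Q \<Longrightarrow> (\<And>A. A \<in> \<F> \<Longrightarrow> B \<inter> A \<noteq> {}) \<Longrightarrow> B \<in> dual_fam Q \<F>"
  and dual_famD_subset: "B \<in> dual_fam Q \<F> \<Longrightarrow> B \<subseteq> Q"
  and dual_famD: "B \<in> dual_fam Q \<F> \<Longrightarrow> A \<in> \<F> \<Longrightarrow> B \<inter> A \<noteq> {}"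
  unfolding dual_fam_def by auto

lemma sharp_dualI: "A \<subseteq> Q \<Longrightarrow> (\<And>B. B \<in> \<F> \<Longrightarrow> A \<inter> B \<in> \<F>) \<Longrightarrow> A \<in> sharp_dual Q \<F>"
  and sharp_dualD_subset: "A \<in> sharp_dual Q \<F> \<Longrightarrow> A \<subseteq> Q"
  and sharp_dualD: "A \<in> sharp_dual Q \<F> \<Longrightarrow> B \<in> \<F> \<Longrightarrow> A \<inter> B \<in> \<F>"
  unfolding sharp_dual_def by auto

lemma Diff_in_dual_fam:
  assumes "family_on Q \<F>" "X \<subseteq> Q" "X \<notin> \<F>"
  shows "Q - X \<in> dual_fam Q \<F>"
proof (rule dual_famI)
  fix A assume "A \<in> \<F>"
  then show "(Q - X) \<inter> A \<noteq> {}"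
    using assms family_on_upward[of Q \<F> A X] family_on_subset[of Q \<F> A] by blast
qed simp

lemma dual_fam_dual_fam:
  assumes "family_on Q \<F>"
  shows "dual_fam Q (dual_fam Q \<F>) = \<F>"
proof
  show "dual_fam Q (dual_fam Q \<F>) \<subseteq> \<F>"
  proof
    fix B assume B: "B \<in> dual_fam Q (dual_fam Q \<F>)"
    show "B \<in> \<F>"
    proof (rule ccontr)
      assume "B \<notin> \<F>"
      then have "Q - B \<in> dual_fam Q \<F>"
        using Diff_in_dual_fam[OF assms dual_famD_subset[OF B]] by blast
      with B show False using dual_famD by blast
    qed
  qed
  show "\<F> \<subseteq> dual_fam Q (dual_fam Q \<F>)"
    by (auto intro!: dual_famI dest: dual_famD family_on_subset[OF assms])
qed

lemma sharp_dual_subset: "Q \<in> \<F> \<Longrightarrow> sharp_dual Q \<F> \<subseteq> \<F>"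
  by (metis Int_absorb2 sharp_dualD sharp_dualD_subset subsetI)

lemma sharp_dual_subset_dual_fam: "{} \<notin> \<F> \<Longrightarrow> sharp_dual Q \<F> \<subseteq> dual_fam Q \<F>"
  by (metis dual_famI sharp_dualD sharp_dualD_subset subsetI)

lemma sharp_dual_Int: "A \<in> sharp_dual Q \<F> \<Longrightarrow> B \<in> sharp_dual Q \<F> \<Longrightarrow> A \<inter> B \<in> sharp_dual Q \<F>"
  by (rule sharp_dualI) (auto simp: Int_assoc dest: sharp_dualD sharp_dualD_subset)

lemma family_on_sharp_dual:
  assumes "family_on Q \<F>"
  shows "family_on Q (sharp_dual Q \<F>)"
  unfolding family_on_def
proof (intro conjI allI impI)
  show "sharp_dual Q \<F> \<subseteq> Pow Q" using sharp_dualD_subset by auto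
  fix A B assume AB: "A \<in> sharp_dual Q \<F> \<and> A \<subseteq> B \<and> B \<subseteq> Q"
  show "B \<in> sharp_dual Q \<F>"
  proof (rule sharp_dualI)
    fix C assume "C \<in> \<F>"
    then have "A \<inter> C \<in> \<F>" using AB sharp_dualD by blast
    moreover have "A \<inter> C \<subseteq> B \<inter> C" "B \<inter> C \<subseteq> Q" using AB by auto
    ultimately show "B \<inter> C \<in> \<F>" by (rule family_on_upward[OF assms])
  qed (use AB in blast)
qed

lemma is_filter_on_sharp_dual:
  assumes "proper_family Q \<F>"
  shows "is_filter_on Q (sharp_dual Q \<F>)"
proof -
  have fam: "family_on Q \<F>" and empty: "{} \<notin> \<F>"
    using assms unfolding proper_family_def by auto
  have "Q \<in> sharp_dual Q \<F>"
    by (rule sharp_dualI) (simp_all add: Int_absorb1 family_on_subset[OF fam])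
  moreover have "{} \<notin> sharp_dual Q \<F>"
    using sharp_dualD[of "{}" Q \<F> Q] proper_family_top[OF assms] empty by auto
  ultimately show ?thesis
    using family_on_sharp_dual[OF fam] sharp_dual_Int
    unfolding is_filter_on_def proper_family_def by blast
qed

lemma full_family_sharp_dual:
  assumes "full_family Q \<F>"
  shows "full_family Q (sharp_dual Q \<F>)"
proof -
  have "B - X \<in> sharp_dual Q \<F>" if B: "B \<in> sharp_dual Q \<F>" and X: "finite X" for B X
  proof (rule sharp_dualI)
    fix C assume "C \<in> \<F>"
    then have "B \<inter> C - X \<in> \<F>" using sharp_dualD[OF B] X assms unfolding full_family_def by blast
    moreover have "B \<inter> C - X = (B - X) \<inter> C" by blast
    ultimately show "(B - X) \<inter> C \<in> \<F>" by simp
  qed (use sharp_dualD_subset[OF B] in blast)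
  moreover have "proper_family Q (sharp_dual Q \<F>)"
    using is_filter_on_sharp_dual assms unfolding full_family_def is_filter_on_def by blast
  ultimately show ?thesis unfolding full_family_def by blast
qed

lemma sharp_dual_dual_fam:
  assumes "family_on Q \<F>"
  shows "sharp_dual Q (dual_fam Q \<F>) = sharp_dual Q \<F>"
proof
  show "sharp_dual Q \<F> \<subseteq> sharp_dual Q (dual_fam Q \<F>)"
  proof
    fix A assume A: "A \<in> sharp_dual Q \<F>"
    show "A \<in> sharp_dual Q (dual_fam Q \<F>)"
    proof (rule sharp_dualI[OF sharp_dualD_subset[OF A]])
      fix C assume C: "C \<in> dual_fam Q \<F>"
      show "A \<inter> C \<in> dual_fam Q \<F>"
      proof (rule dual_famI)
        show "A \<inter> C \<subseteq> Q" using dual_famD_subset[OF C] by auto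
        fix B assume "B \<in> \<F>"
        from dual_famD[OF C sharp_dualD[OF A this]] show "A \<inter> C \<inter> B \<noteq> {}" by auto
      qed
    qed
  qed
  show "sharp_dual Q (dual_fam Q \<F>) \<subseteq> sharp_dual Q \<F>"
  proof
    fix A assume A: "A \<in> sharp_dual Q (dual_fam Q \<F>)"
    show "A \<in> sharp_dual Q \<F>"
    proof (rule sharp_dualI[OF sharp_dualD_subset[OF A]])
      fix B assume B: "B \<in> \<F>"
      show "A \<inter> B \<in> \<F>"
      proof (rule ccontr)
        assume "A \<inter> B \<notin> \<F>"
        with sharp_dualD_subset[OF A] have "Q - A \<inter> B \<in> dual_fam Q \<F>"
          by (intro Diff_in_dual_fam[OF assms]) auto
        then have "A \<inter> (Q - A \<inter> B) \<in> dual_fam Q \<F>" by (rule sharp_dualD[OF A])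
        \<comment> \<open>but \<open>A \<inter> (Q - A \<inter> B)\<close> is disjoint from \<open>B \<in> \<F>\<close>\<close>
        from dual_famD[OF this B] show False by auto
      qed
    qed
  qed
qed

lemma sharp_dual_filter:
  assumes "is_filter_on Q \<F>"
  shows "sharp_dual Q \<F> = \<F>"
proof
  have fam: "family_on Q \<F>" and Int: "\<And>A B. A \<in> \<F> \<Longrightarrow> B \<in> \<F> \<Longrightarrow> A \<inter> B \<in> \<F>"
    using assms unfolding is_filter_on_def proper_family_def by auto
  show "sharp_dual Q \<F> \<subseteq> \<F>"
    using assms unfolding is_filter_on_def by (simp add: sharp_dual_subset proper_family_top)
  show "\<F> \<subseteq> sharp_dual Q \<F>"
  proof
    fix A assume "A \<in> \<F>"
    then show "A \<in> sharp_dual Q \<F>"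
      by (intro sharp_dualI family_on_subset[OF fam] Int)
  qed
qed

lemma sharp_dual_filterdual:
  assumes "is_filterdual_on Q \<F>"
  shows "sharp_dual Q \<F> = dual_fam Q \<F>"
proof -
  obtain \<G> where \<G>: "is_filter_on Q \<G>" and \<F>: "\<F> = dual_fam Q \<G>"
    using assms unfolding is_filterdual_on_def by auto
  have fam: "family_on Q \<G>" using \<G> unfolding is_filter_on_def proper_family_def by auto
  have "sharp_dual Q \<F> = sharp_dual Q \<G>" unfolding \<F> by (rule sharp_dual_dual_fam[OF fam])
  also have "\<dots> = \<G>" by (rule sharp_dual_filter[OF \<G>])
  also have "\<dots> = dual_fam Q \<F>" unfolding \<F> by (rule dual_fam_dual_fam[OF fam, symmetric])
  finally show ?thesis .
qed

theorem proposition5p1: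
  fixes Q :: "'a set" and \<F> :: "'a set set"
  assumes "infinite Q" and "proper_family Q \<F>"
  shows "(is_filter_on Q (sharp_dual Q \<F>)
          \<and> sharp_dual Q \<F> \<subseteq> \<F> \<inter> dual_fam Q \<F>
          \<and> (full_family Q \<F> \<longrightarrow> full_family Q (sharp_dual Q \<F>)))
       \<and> sharp_dual Q \<F> = sharp_dual Q (dual_fam Q \<F>)
       \<and> (is_filter_on Q \<F> \<longrightarrow> sharp_dual Q \<F> = \<F>)
       \<and> sharp_dual Q (sharp_dual Q \<F>) = sharp_dual Q \<F>
       \<and> (is_filterdual_on Q \<F> \<longrightarrow> sharp_dual Q \<F> = dual_fam Q \<F>)"
proof -
  have fam: "family_on Q \<F>" and empty: "{} \<notin> \<F>"
    using assms(2) unfolding proper_family_def by auto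
  have filter: "is_filter_on Q (sharp_dual Q \<F>)"
    using is_filter_on_sharp_dual[OF assms(2)] .
  have "sharp_dual Q \<F> \<subseteq> \<F> \<inter> dual_fam Q \<F>"
    using sharp_dual_subset[OF proper_family_top[OF assms(2)]] sharp_dual_subset_dual_fam[OF empty]
    by blast
  with filter show ?thesis
    using full_family_sharp_dual sharp_dual_dual_fam[OF fam] sharp_dual_filter
      sharp_dual_filter[OF filter] sharp_dual_filterdual
    by (intro conjI impI) simp_all
qed

end
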